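(* Let $R$ be a localizable partially ordered commutative ring. Then the extended Gelfand transformation $\widehat{\cdot}\colon R\to\mathscr{C}_\approx(\mathcal{D}_{\mathrm{loc}}(R))$ is a positive ring morphism.
   Context: Rings are commutative with unit; ring morphisms are unital. A partially ordered commutative ring is a commutative ring $R$ with partial order $\le$, $r\le s\Rightarrow r+t\le s+t$, positive cone $R^+$ closed under multiplication and containing all squares. $\mathbb{N}_0=\{0,1,2,\dots\}$. $\mathrm{Loc}(R)$ is the set of $s\in1+R^+$ such that $rs\in R^+$ implies $r\in R^+$ for all $r\in R$; $R$ is localizable if every $r$ satisfies $-s\le r\le s$ for some $s\in\mathrm{Loc}(R)$. A ring morphism is positive if it maps positive elements to positive elements. Admissible domains on a space $Y$: a set $\mathcal{D}$ of open subsets with $Y\in\mathcal{D}$, closed under pairwise intersections. $\mathscr{C}_\approx(\mathcal{D})$: functions in $\bigcup_{A\in\mathcal{D}}\mathscr{C}(A)$ with pointwise operations on $\operatorname{dom}f\cap\operatorname{dom}g$, modulo $f\approx g$ iff $f|_A=g|_A$ for some $A\in\mathcal{D}$, $A\subseteq\operatorname{dom}f\cap\operatorname{dom}g$; ordered by $[f]\le[g]$ iff $f|_A\le g|_A$ for some such $A$. $R_{\mathrm{loc}}$: fractions $r/s$ ($r\in R$, $s\in\mathrm{Loc}(R)$), $r/s=r'/s'$ iff $rs'=r's$, usual operations, $p/q\le r/s$ iff $ps\le rq$. $R^{\mathrm{bd}}_{\mathrm{loc}}=\{a:\exists n\in\mathbb{N}_0,\ -n\le a\le n\}$. $\mathcal{K}(R)$: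 ring morphisms $\varphi\colon R^{\mathrm{bd}}_{\mathrm{loc}}\to\mathbb{R}$ with $\varphi(a)\ge0$ for $a\ge0$, weak-$*$ topology. $\mathrm{O}_{s<\infty}=\{\varphi:\varphi(1/s)>0\}$, $\mathcal{D}_{\mathrm{loc}}(R)=\{\mathrm{O}_{s<\infty}:s\in\mathrm{Loc}(R)\}$ (admissible). The extended Gelfand transformation sends $r\in R$ to the class $\widehat r$ of $r_s\colon\mathrm{O}_{s<\infty}\to\mathbb{R}$, $\varphi\mapsto\varphi(1/s)^{-1}\varphi(r/s)$, for any $s\in\mathrm{Loc}(R)$ with $r/s\in R^{\mathrm{bd}}_{\mathrm{loc}}$ (independent of $s$). *)

theory Defs
  imports "HOL-Analysis.Analysis"
begin

definition pocr :: "('a::comm_ring_1 \<Rightarrow> 'a \<Rightarrow> bool) \<Rightarrow> bool" where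
  "pocr le \<longleftrightarrow>
     (\<forall>x. le x x) \<and> (\<forall>x y. le x y \<longrightarrow> le y x \<longrightarrow> x = y) \<and>
     (\<forall>x y z. le x y \<longrightarrow> le y z \<longrightarrow> le x z) \<and>
     (\<forall>r s t. le r s \<longrightarrow> le (r + t) (s + t)) \<and>
     (\<forall>x y. le 0 x \<longrightarrow> le 0 y \<longrightarrow> le 0 (x * y)) \<and>
     (\<forall>x. le 0 (x * x))"

definition Loc :: "('a::comm_ring_1 \<Rightarrow> 'a \<Rightarrow> bool) \<Rightarrow> 'a set" where
  "Loc le = {s. (\<exists>p. le 0 p \<and> s = 1 + p) \<and> (\<forall>r. le 0 (r * s) \<longrightarrow> le 0 r)}"

definition localizable :: "('a::comm_ring_1 \<Rightarrow> 'a \<Rightarrow> bool) \<Rightarrow> bool" where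
  "localizable le \<longleftrightarrow> (\<forall>r. \<exists>s\<in>Loc le. le (- s) r \<and> le r s)"

text \<open>A pair (r,s) stands for the fraction r/s; (r,s) and (r',s') represent the
  same element iff r s' = r' s.\<close>

definition frac_eq :: "'a::comm_ring_1 \<times> 'a \<Rightarrow> 'a \<times> 'a \<Rightarrow> bool" where
  "frac_eq p q \<longleftrightarrow> fst p * snd q = fst q * snd p"

definition frac_add :: "'a::comm_ring_1 \<times> 'a \<Rightarrow> 'a \<times> 'a \<Rightarrow> 'a \<times> 'a" where
  "frac_add p q = (fst p * snd q + fst q * snd p, snd p * snd q)"

definition frac_mult :: "'a::comm_ring_1 \<times> 'a \<Rightarrow> 'a \<times> 'a \<Rightarrow> 'a \<times> 'a" where
  "frac_mult p q = (fst p * fst q, snd p * snd q)"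

text \<open>(r,s) represents an element of the bounded part: -n \<le> r/s \<le> n, i.e.
  (-n)/1 \<le> r/s and r/s \<le> n/1, i.e. (-n) s \<le> r and r \<le> n s.\<close>

definition loc_bd :: "('a::comm_ring_1 \<Rightarrow> 'a \<Rightarrow> bool) \<Rightarrow> 'a \<times> 'a \<Rightarrow> bool" where
  "loc_bd le p \<longleftrightarrow> snd p \<in> Loc le \<and>
     (\<exists>n::nat. le ((- of_nat n) * snd p) (fst p * 1) \<and> le (fst p * 1) (of_nat n * snd p))"

text \<open>Positive ring morphisms from the bounded part to the reals, represented as
  real functions on representing pairs which respect the equivalence and vanish
  outside the representatives of bounded elements.  Positivity: 0/1 \<le> r/s iff
  0 s \<le> r 1.\<close>

definition character :: "('a::comm_ring_1 \<Rightarrow> 'a \<Rightarrow> bool) \<Rightarrow> ('a \<times> 'a \<Rightarrow> real) \<Rightarrow> bool" where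
  "character le \<phi> \<longleftrightarrow>
     (\<forall>p. \<not> loc_bd le p \<longrightarrow> \<phi> p = 0) \<and>
     (\<forall>p q. loc_bd le p \<longrightarrow> loc_bd le q \<longrightarrow> frac_eq p q \<longrightarrow> \<phi> p = \<phi> q) \<and>
     \<phi> (1, 1) = 1 \<and>
     (\<forall>p q. loc_bd le p \<longrightarrow> loc_bd le q \<longrightarrow> \<phi> (frac_add p q) = \<phi> p + \<phi> q) \<and>
     (\<forall>p q. loc_bd le p \<longrightarrow> loc_bd le q \<longrightarrow> \<phi> (frac_mult p q) = \<phi> p * \<phi> q) \<and>
     (\<forall>p. loc_bd le p \<longrightarrow> le (0 * snd p) (fst p * 1) \<longrightarrow> \<phi> p \<ge> 0)"

text \<open>The space K(R); its weak-* topology is the subspace topology of the product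
  topology on functions (pairs \<Rightarrow> real).\<close>

definition Kspace :: "('a::comm_ring_1 \<Rightarrow> 'a \<Rightarrow> bool) \<Rightarrow> ('a \<times> 'a \<Rightarrow> real) set" where
  "Kspace le = {\<phi>. character le \<phi>}"

definition Ktop :: "('a::comm_ring_1 \<Rightarrow> 'a \<Rightarrow> bool) \<Rightarrow> ('a \<times> 'a \<Rightarrow> real) topology" where
  "Ktop le = subtopology euclidean (Kspace le)"

definition Ofin :: "('a::comm_ring_1 \<Rightarrow> 'a \<Rightarrow> bool) \<Rightarrow> 'a \<Rightarrow> ('a \<times> 'a \<Rightarrow> real) set" where
  "Ofin le s = {\<phi> \<in> Kspace le. \<phi> (1, s) > 0}"

definition Dloc :: "('a::comm_ring_1 \<Rightarrow> 'a \<Rightarrow> bool) \<Rightarrow> ('a \<times> 'a \<Rightarrow> real) set set" where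
  "Dloc le = Ofin le ` Loc le"

section \<open>The ring C_approx(D), represented by pairs (domain, function)\<close>

definition cf_mem :: "'b topology \<Rightarrow> 'b set set \<Rightarrow> 'b set \<times> ('b \<Rightarrow> real) \<Rightarrow> bool" where
  "cf_mem T D F \<longleftrightarrow> fst F \<in> D \<and> continuous_map (subtopology T (fst F)) euclideanreal (snd F)"

definition cf_eq :: "'b set set \<Rightarrow> 'b set \<times> ('b \<Rightarrow> real) \<Rightarrow> 'b set \<times> ('b \<Rightarrow> real) \<Rightarrow> bool" where
  "cf_eq D F G \<longleftrightarrow> (\<exists>A\<in>D. A \<subseteq> fst F \<inter> fst G \<and> (\<forall>x\<in>A. snd F x = snd G x))"

definition cf_le :: "'b set set \<Rightarrow> 'b set \<times> ('b \<Rightarrow> real) \<Rightarrow> 'b set \<times> ('b \<Rightarrow> real) \<Rightarrow> bool" where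
  "cf_le D F G \<longleftrightarrow> (\<exists>A\<in>D. A \<subseteq> fst F \<inter> fst G \<and> (\<forall>x\<in>A. snd F x \<le> snd G x))"

definition cf_add :: "'b set \<times> ('b \<Rightarrow> real) \<Rightarrow> 'b set \<times> ('b \<Rightarrow> real) \<Rightarrow> 'b set \<times> ('b \<Rightarrow> real)" where
  "cf_add F G = (fst F \<inter> fst G, \<lambda>x. snd F x + snd G x)"

definition cf_mult :: "'b set \<times> ('b \<Rightarrow> real) \<Rightarrow> 'b set \<times> ('b \<Rightarrow> real) \<Rightarrow> 'b set \<times> ('b \<Rightarrow> real)" where
  "cf_mult F G = (fst F \<inter> fst G, \<lambda>x. snd F x * snd G x)"

definition cf_const :: "'b set \<Rightarrow> real \<Rightarrow> 'b set \<times> ('b \<Rightarrow> real)" where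
  "cf_const Y c = (Y, \<lambda>_. c)"

definition r_s :: "'a::comm_ring_1 \<Rightarrow> 'a \<Rightarrow> ('a \<times> 'a \<Rightarrow> real) \<Rightarrow> real" where
  "r_s r s = (\<lambda>\<phi>. inverse (\<phi> (1, s)) * \<phi> (r, s))"

text \<open>A representative of the class of r: any admissible s may be used
  (the class is independent of the choice).\<close>

definition gelfand :: "('a::comm_ring_1 \<Rightarrow> 'a \<Rightarrow> bool) \<Rightarrow> 'a \<Rightarrow> ('a \<times> 'a \<Rightarrow> real) set \<times> (('a \<times> 'a \<Rightarrow> real) \<Rightarrow> real)" where
  "gelfand le r = (let s = (SOME s. s \<in> Loc le \<and> loc_bd le (r, s)) in (Ofin le s, r_s r s))"

end

theory Submission
  imports Defs
begin

text \<open>Write \<open>O(s)\<close> for \<open>O\<^sub>s\<^sub><\<^sub>\<infinity>\<close>. Every \<open>r\<close> has a denominator \<open>s \<in> Loc(R)\<close>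
  with \<open>r/s\<close> bounded, and on \<open>O(s)\<close> the value \<open>\<phi>(1/s)\<^sup>-\<^sup>1 \<phi>(r/s)\<close> does not depend on
  the choice of \<open>s\<close>, because multiplicativity of \<open>\<phi>\<close> gives
  \<open>\<phi>(r/s) \<phi>(1/t) = \<phi>(r/t) \<phi>(1/s)\<close>. As \<open>\<phi>(1/st) = \<phi>(1/s) \<phi>(1/t)\<close> with nonnegative
  factors, \<open>O(st) = O(s) \<inter> O(t)\<close>. Hence finitely many transforms can be compared on
  \<open>O(t)\<close>, \<open>t\<close> the product of their denominators, where all of them are computed with
  the common denominator \<open>t\<close> and sums and products pass through \<open>\<phi>\<close>.\<close>

locale po_comm_ring =
  fixes le :: "'a::comm_ring_1 \<Rightarrow> 'a \<Rightarrow> bool"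
  assumes pocr: "pocr le"
begin

lemma le_iff_nonneg_diff: "le x y \<longleftrightarrow> le 0 (y - x)"
proof
  assume "le x y"
  then have "le (x + - x) (y + - x)" using pocr unfolding pocr_def by blast
  then show "le 0 (y - x)" by simp
next
  assume "le 0 (y - x)"
  then have "le (0 + x) (y - x + x)" using pocr unfolding pocr_def by blast
  then show "le x y" by simp
qed

lemma nonneg_add: "le 0 x \<Longrightarrow> le 0 y \<Longrightarrow> le 0 (x + y)"
  by (metis le_iff_nonneg_diff add_diff_cancel_right' pocr pocr_def)

lemma nonneg_mult: "le 0 x \<Longrightarrow> le 0 y \<Longrightarrow> le 0 (x * y)"
  using pocr unfolding pocr_def by blast

lemma nonneg_zero: "le 0 0"
  using pocr unfolding pocr_def by blast

lemma nonneg_one: "le 0 1"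
  using pocr unfolding pocr_def by (metis mult_1)

lemma nonneg_of_nat: "le 0 (of_nat n)"
  by (induction n) (auto intro: nonneg_add nonneg_one nonneg_zero simp: add.commute)

lemma Loc_minus_one_nonneg: "s \<in> Loc le \<Longrightarrow> le 0 (s - 1)"
  unfolding Loc_def by auto

lemma Loc_nonneg: "s \<in> Loc le \<Longrightarrow> le 0 s"
  using nonneg_add[OF Loc_minus_one_nonneg nonneg_one, of s] by simp

lemma Loc_cancel: "s \<in> Loc le \<Longrightarrow> le 0 (r * s) \<Longrightarrow> le 0 r"
  unfolding Loc_def by auto

lemma one_in_Loc: "1 \<in> Loc le"
  unfolding Loc_def using nonneg_zero by auto

lemma Loc_mult_closed:
  assumes "s \<in> Loc le" "t \<in> Loc le"
  shows "s * t \<in> Loc le"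
proof -
  have "le 0 ((s - 1) + (t - 1) + (s - 1) * (t - 1))"
    using assms by (intro nonneg_add nonneg_mult Loc_minus_one_nonneg)
  moreover have "s * t = 1 + ((s - 1) + (t - 1) + (s - 1) * (t - 1))"
    by (simp add: algebra_simps)
  moreover have "le 0 r" if "le 0 (r * (s * t))" for r
    using that assms Loc_cancel by (metis mult.assoc)
  ultimately show ?thesis unfolding Loc_def by blast
qed

lemma loc_bd_iff:
  "loc_bd le (r, s) \<longleftrightarrow>
     s \<in> Loc le \<and> (\<exists>n::nat. le 0 (of_nat n * s + r) \<and> le 0 (of_nat n * s - r))"
proof -
  have "le (- (of_nat n * s)) r \<longleftrightarrow> le 0 (of_nat n * s + r)" for n
    by (subst le_iff_nonneg_diff) (simp add: add.commute)
  then show ?thesis unfolding loc_bd_def by (simp add: le_iff_nonneg_diff[of r])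
qed

lemma loc_bd_denom: "loc_bd le (r, s) \<Longrightarrow> s \<in> Loc le"
  by (simp add: loc_bd_iff)

lemma loc_bd_mult_denom:
  assumes "loc_bd le (r, s)" "u \<in> Loc le"
  shows "loc_bd le (r, s * u)"
proof -
  obtain n where s: "s \<in> Loc le" and n: "le 0 (of_nat n * s + r)" "le 0 (of_nat n * s - r)"
    using assms(1) loc_bd_iff by blast
  have ns: "le 0 (of_nat n * s * (u - 1))"
    using assms s by (intro nonneg_mult nonneg_of_nat Loc_nonneg Loc_minus_one_nonneg)
  have "le 0 (of_nat n * (s * u) + r)"
    using nonneg_add[OF ns n(1)] by (simp add: algebra_simps)
  moreover have "le 0 (of_nat n * (s * u) - r)"
    using nonneg_add[OF ns n(2)] by (simp add: algebra_simps)
  ultimately show ?thesis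
    using Loc_mult_closed[OF s assms(2)] unfolding loc_bd_iff by (intro conjI exI[of _ n])
qed

lemma loc_bd_one:
  assumes "s \<in> Loc le"
  shows "loc_bd le (1, s)"
proof -
  have "le 0 (s + 1)" "le 0 (s - 1)"
    using assms by (auto intro: nonneg_add nonneg_one Loc_nonneg Loc_minus_one_nonneg)
  with assms show ?thesis unfolding loc_bd_iff by (intro conjI exI[of _ 1]) auto
qed

lemma loc_bd_diag:
  assumes "s \<in> Loc le"
  shows "loc_bd le (s, s)"
proof -
  have "le 0 (of_nat 1 * s + s)" "le 0 (of_nat 1 * s - s)"
    using nonneg_add[OF Loc_nonneg Loc_nonneg, OF assms assms] nonneg_zero by simp_all
  with assms show ?thesis unfolding loc_bd_iff by (intro conjI exI[of _ 1])
qed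

lemma loc_bd_add:
  assumes "loc_bd le (x, t)" "loc_bd le (y, t)"
  shows "loc_bd le (x + y, t)"
proof -
  obtain n where t: "t \<in> Loc le" and n: "le 0 (of_nat n * t + x)" "le 0 (of_nat n * t - x)"
    using assms(1) loc_bd_iff by blast
  obtain m where m: "le 0 (of_nat m * t + y)" "le 0 (of_nat m * t - y)"
    using assms(2) loc_bd_iff by blast
  have "le 0 (of_nat (n + m) * t + (x + y))"
    using nonneg_add[OF n(1) m(1)] by (simp add: algebra_simps)
  moreover have "le 0 (of_nat (n + m) * t - (x + y))"
    using nonneg_add[OF n(2) m(2)] by (simp add: algebra_simps)
  ultimately show ?thesis using t unfolding loc_bd_iff by (intro conjI exI[of _ "n + m"])
qed

lemma loc_bd_mult:
  assumes "loc_bd le (r, s)" "loc_bd le (r', s')"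
  shows "loc_bd le (r * r', s * s')"
proof -
  obtain n where s: "s \<in> Loc le" and n: "le 0 (of_nat n * s + r)" "le 0 (of_nat n * s - r)"
    using assms(1) loc_bd_iff by blast
  obtain m where s': "s' \<in> Loc le" and m: "le 0 (of_nat m * s' + r')" "le 0 (of_nat m * s' - r')"
    using assms(2) loc_bd_iff by blast
  have ns: "le 0 (of_nat n * s)" and ms: "le 0 (of_nat m * s')"
    using s s' by (auto intro: nonneg_mult nonneg_of_nat Loc_nonneg)
  have "le 0 ((of_nat n * s - r) * (of_nat m * s' + r') + (of_nat n * s) * (of_nat m * s' - r')
              + (of_nat m * s') * (of_nat n * s + r))"
    using nonneg_mult[OF n(2) m(1)] nonneg_mult[OF ns m(2)] nonneg_mult[OF ms n(1)]
    by (intro nonneg_add)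
  then have minus: "le 0 (of_nat (3 * n * m) * (s * s') - r * r')"
    by (simp add: algebra_simps)
  have "le 0 ((of_nat n * s - r) * (of_nat m * s' - r') + (of_nat n * s) * (of_nat m * s' + r')
              + (of_nat m * s') * (of_nat n * s + r))"
    using nonneg_mult[OF n(2) m(2)] nonneg_mult[OF ns m(1)] nonneg_mult[OF ms n(1)]
    by (intro nonneg_add)
  then have plus: "le 0 (of_nat (3 * n * m) * (s * s') + r * r')"
    by (simp add: algebra_simps)
  show ?thesis using minus plus Loc_mult_closed[OF s s'] unfolding loc_bd_iff by blast
qed

context
  fixes \<phi> :: "'a \<times> 'a \<Rightarrow> real"
  assumes character: "character le \<phi>"
begin

lemma character_cong: "loc_bd le p \<Longrightarrow> loc_bd le q \<Longrightarrow> frac_eq p q \<Longrightarrow> \<phi> p = \<phi> q"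
  using character unfolding character_def by blast

lemma character_add: "loc_bd le p \<Longrightarrow> loc_bd le q \<Longrightarrow> \<phi> (frac_add p q) = \<phi> p + \<phi> q"
  using character unfolding character_def by blast

lemma character_mult: "loc_bd le p \<Longrightarrow> loc_bd le q \<Longrightarrow> \<phi> (frac_mult p q) = \<phi> p * \<phi> q"
  using character unfolding character_def by blast

lemma character_one: "\<phi> (1, 1) = 1"
  using character unfolding character_def by blast

lemma character_nonneg: "loc_bd le (r, s) \<Longrightarrow> le 0 r \<Longrightarrow> \<phi> (r, s) \<ge> 0"
  using character unfolding character_def by force

lemma character_diag: "s \<in> Loc le \<Longrightarrow> \<phi> (s, s) = 1"
  using character_cong[OF loc_bd_diag loc_bd_one[OF one_in_Loc], of s] character_one
  by (simp add: frac_eq_def)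

lemma character_inverse_nonneg: "s \<in> Loc le \<Longrightarrow> \<phi> (1, s) \<ge> 0"
  using character_nonneg[OF loc_bd_one nonneg_one] .

lemma character_inverse_mult:
  "s \<in> Loc le \<Longrightarrow> t \<in> Loc le \<Longrightarrow> \<phi> (1, s * t) = \<phi> (1, s) * \<phi> (1, t)"
  using character_mult[OF loc_bd_one loc_bd_one, of s t] by (simp add: frac_mult_def)

lemma character_change_denom:
  assumes "loc_bd le (x, s)" "loc_bd le (x, t)"
  shows "\<phi> (x, s) * \<phi> (1, t) = \<phi> (x, t) * \<phi> (1, s)"
proof -
  have "frac_mult (x, s) (1, t) = frac_mult (x, t) (1, s)"
    by (simp add: frac_mult_def mult.commute)
  then show ?thesis
    using assms character_mult loc_bd_one loc_bd_denom by metis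
qed

lemma r_s_change_denom:
  assumes "loc_bd le (x, s)" "loc_bd le (x, t)" "\<phi> (1, s) > 0" "\<phi> (1, t) > 0"
  shows "r_s x s \<phi> = r_s x t \<phi>"
  using character_change_denom[OF assms(1,2)] assms(3,4) unfolding r_s_def
  by (simp add: field_simps)

lemma r_s_add:
  assumes "loc_bd le (x, t)" "loc_bd le (y, t)"
  shows "r_s (x + y) t \<phi> = r_s x t \<phi> + r_s y t \<phi>"
proof -
  have t: "t \<in> Loc le" using assms(1) loc_bd_denom by blast
  have "\<phi> (x, t) + \<phi> (y, t) = \<phi> (frac_add (x, t) (y, t))"
    using character_add assms by simp
  also have "frac_add (x, t) (y, t) = frac_mult (x + y, t) (t, t)"
    by (simp add: frac_add_def frac_mult_def algebra_simps)
  also have "\<phi> \<dots> = \<phi> (x + y, t)"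
    using character_mult[OF loc_bd_add[OF assms] loc_bd_diag[OF t]] character_diag[OF t] by simp
  finally have "\<phi> (x + y, t) = \<phi> (x, t) + \<phi> (y, t)" by simp
  then show ?thesis unfolding r_s_def by (simp add: distrib_left)
qed

lemma r_s_mult:
  assumes "loc_bd le (x, s)" "loc_bd le (y, t)"
  shows "r_s (x * y) (s * t) \<phi> = r_s x s \<phi> * r_s y t \<phi>"
proof -
  have "\<phi> (x * y, s * t) = \<phi> (x, s) * \<phi> (y, t)"
    using character_mult[OF assms] by (simp add: frac_mult_def)
  then show ?thesis
    unfolding r_s_def using character_inverse_mult assms loc_bd_denom by simp
qed

end

lemma mem_Ofin_iff: "\<phi> \<in> Ofin le s \<longleftrightarrow> character le \<phi> \<and> \<phi> (1, s) > 0"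
  by (simp add: Ofin_def Kspace_def)

lemma Ofin_mult:
  assumes "s \<in> Loc le" "t \<in> Loc le"
  shows "Ofin le (s * t) = Ofin le s \<inter> Ofin le t"
proof -
  have "\<phi> (1, s) * \<phi> (1, t) > 0 \<longleftrightarrow> \<phi> (1, s) > 0 \<and> \<phi> (1, t) > 0" if "character le \<phi>" for \<phi>
    using character_inverse_nonneg[OF that assms(1)] character_inverse_nonneg[OF that assms(2)]
    by (simp add: zero_less_mult_iff)
  then show ?thesis
    by (auto simp: mem_Ofin_iff character_inverse_mult[OF _ assms])
qed

lemma Ofin_in_Dloc: "s \<in> Loc le \<Longrightarrow> Ofin le s \<in> Dloc le"
  unfolding Dloc_def by blast

lemma Ofin_subset_Kspace: "Ofin le s \<subseteq> Kspace le"
  unfolding Ofin_def by blast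

end

locale localizable_po_comm_ring = po_comm_ring +
  assumes localizable: "localizable le"
begin

definition denom :: "'a \<Rightarrow> 'a" where
  "denom r = (SOME s. s \<in> Loc le \<and> loc_bd le (r, s))"

lemma ex_loc_bd: "\<exists>s. s \<in> Loc le \<and> loc_bd le (r, s)"
proof -
  obtain s where s: "s \<in> Loc le" "le (- s) r" "le r s"
    using localizable unfolding localizable_def by blast
  have "le 0 (of_nat 1 * s + r)" "le 0 (of_nat 1 * s - r)"
    using s(2,3) le_iff_nonneg_diff[of "- s" r] le_iff_nonneg_diff[of r s]
    by (simp_all add: add.commute)
  with s(1) show ?thesis unfolding loc_bd_iff by (intro exI[of _ s] conjI exI[of _ 1])
qed

lemma loc_bd_denom_of: "loc_bd le (r, denom r)"
  unfolding denom_def using someI_ex[OF ex_loc_bd] by blast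

lemma denom_in_Loc: "denom r \<in> Loc le"
  using loc_bd_denom[OF loc_bd_denom_of] .

lemma gelfand_eq: "gelfand le r = (Ofin le (denom r), r_s r (denom r))"
  unfolding gelfand_def denom_def Let_def ..

lemma gelfand_apply:
  assumes "loc_bd le (r, s)" "\<phi> \<in> Ofin le s" "\<phi> \<in> Ofin le (denom r)"
  shows "snd (gelfand le r) \<phi> = r_s r s \<phi>"
  using assms r_s_change_denom[OF _ loc_bd_denom_of assms(1)]
  by (simp add: gelfand_eq mem_Ofin_iff)

lemma gelfand_cf_mem: "cf_mem (Ktop le) (Dloc le) (gelfand le r)"
proof -
  have "continuous_on (Kspace le \<inter> Ofin le (denom r)) (r_s r (denom r))"
    unfolding r_s_def
    by (intro continuous_intros continuous_on_product_coordinates[THEN continuous_on_subset])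
       (auto simp: mem_Ofin_iff)
  then show ?thesis
    unfolding cf_mem_def gelfand_eq Ktop_def using Ofin_in_Dloc[OF denom_in_Loc]
    by (simp add: subtopology_subtopology)
qed

lemma gelfand_add:
  "cf_eq (Dloc le) (gelfand le (r + r')) (cf_add (gelfand le r) (gelfand le r'))"
proof -
  define t where "t = denom r * denom r' * denom (r + r')"
  have t: "t \<in> Loc le"
    unfolding t_def by (intro Loc_mult_closed denom_in_Loc)
  have domain: "Ofin le t = Ofin le (denom r) \<inter> Ofin le (denom r') \<inter> Ofin le (denom (r + r'))"
    unfolding t_def by (simp add: Ofin_mult Loc_mult_closed denom_in_Loc)
  have bd: "loc_bd le (r, t)" "loc_bd le (r', t)"
    using loc_bd_mult_denom[OF loc_bd_denom_of[of r], of "denom r' * denom (r + r')"]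
      loc_bd_mult_denom[OF loc_bd_denom_of[of r'], of "denom r * denom (r + r')"]
    by (simp_all add: t_def Loc_mult_closed denom_in_Loc ac_simps)
  have "snd (gelfand le (r + r')) \<phi> = snd (gelfand le r) \<phi> + snd (gelfand le r') \<phi>"
    if \<phi>: "\<phi> \<in> Ofin le t" for \<phi>
  proof -
    have "snd (gelfand le (r + r')) \<phi> = r_s (r + r') t \<phi>"
      using \<phi> domain by (intro gelfand_apply loc_bd_add bd) auto
    also have "\<dots> = r_s r t \<phi> + r_s r' t \<phi>"
      using \<phi> bd by (intro r_s_add) (auto simp: mem_Ofin_iff)
    also have "\<dots> = snd (gelfand le r) \<phi> + snd (gelfand le r') \<phi>"
      using \<phi> domain bd by (simp add: gelfand_apply)
    finally show ?thesis .
  qed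
  then show ?thesis
    unfolding cf_eq_def cf_add_def using Ofin_in_Dloc[OF t] domain
    by (intro bexI[of _ "Ofin le t"]) (auto simp: gelfand_eq)
qed

lemma gelfand_mult:
  "cf_eq (Dloc le) (gelfand le (r * r')) (cf_mult (gelfand le r) (gelfand le r'))"
proof -
  define t where "t = denom r * denom r' * denom (r * r')"
  have t: "t \<in> Loc le"
    unfolding t_def by (intro Loc_mult_closed denom_in_Loc)
  have domain: "Ofin le t = Ofin le (denom r * denom r') \<inter> Ofin le (denom (r * r'))"
    "Ofin le (denom r * denom r') = Ofin le (denom r) \<inter> Ofin le (denom r')"
    unfolding t_def by (simp_all add: Ofin_mult Loc_mult_closed denom_in_Loc)
  have "snd (gelfand le (r * r')) \<phi> = snd (gelfand le r) \<phi> * snd (gelfand le r') \<phi>"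
    if \<phi>: "\<phi> \<in> Ofin le t" for \<phi>
  proof -
    have "snd (gelfand le (r * r')) \<phi> = r_s (r * r') (denom r * denom r') \<phi>"
      using \<phi> domain by (intro gelfand_apply loc_bd_mult loc_bd_denom_of) auto
    also have "\<dots> = r_s r (denom r) \<phi> * r_s r' (denom r') \<phi>"
      using \<phi> by (intro r_s_mult loc_bd_denom_of) (auto simp: mem_Ofin_iff)
    finally show ?thesis by (simp add: gelfand_eq)
  qed
  then show ?thesis
    unfolding cf_eq_def cf_mult_def using Ofin_in_Dloc[OF t] domain
    by (intro bexI[of _ "Ofin le t"]) (auto simp: gelfand_eq)
qed

lemma gelfand_one: "cf_eq (Dloc le) (gelfand le 1) (cf_const (Kspace le) 1)"
proof -
  have "r_s 1 (denom 1) \<phi> = 1" if "\<phi> \<in> Ofin le (denom 1)" for \<phi>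
    using that unfolding r_s_def by (simp add: mem_Ofin_iff)
  then show ?thesis
    unfolding cf_eq_def cf_const_def gelfand_eq
    using Ofin_in_Dloc[OF denom_in_Loc] Ofin_subset_Kspace
    by (intro bexI[of _ "Ofin le (denom 1)"]) auto
qed

lemma gelfand_nonneg:
  assumes "le 0 r"
  shows "cf_le (Dloc le) (cf_const (Kspace le) 0) (gelfand le r)"
proof -
  have "0 \<le> r_s r (denom r) \<phi>" if "\<phi> \<in> Ofin le (denom r)" for \<phi>
    using that character_nonneg[OF _ loc_bd_denom_of assms] unfolding r_s_def
    by (simp add: mem_Ofin_iff)
  then show ?thesis
    unfolding cf_le_def cf_const_def gelfand_eq
    using Ofin_in_Dloc[OF denom_in_Loc] Ofin_subset_Kspace
    by (intro bexI[of _ "Ofin le (denom r)"]) auto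
qed

end

theorem proposition26:
  fixes le :: "'a::comm_ring_1 \<Rightarrow> 'a \<Rightarrow> bool"
  assumes "pocr le" and "localizable le"
  shows "(\<forall>r. cf_mem (Ktop le) (Dloc le) (gelfand le r)) \<and>
         (\<forall>r r'. cf_eq (Dloc le) (gelfand le (r + r')) (cf_add (gelfand le r) (gelfand le r'))) \<and>
         (\<forall>r r'. cf_eq (Dloc le) (gelfand le (r * r')) (cf_mult (gelfand le r) (gelfand le r'))) \<and>
         cf_eq (Dloc le) (gelfand le 1) (cf_const (Kspace le) 1) \<and>
         (\<forall>r. le 0 r \<longrightarrow> cf_le (Dloc le) (cf_const (Kspace le) 0) (gelfand le r))"
proof -
  interpret localizable_po_comm_ring le
    using assms by unfold_locales
  show ?thesis
    by (intro conjI allI impI gelfand_cf_mem gelfand_add gelfand_mult gelfand_one gelfand_nonneg)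
qed

end
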